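(* Suppose Assumptions A1, A3 and A4 hold. Let $\{w_k\}$ be generated by $w_{k+1}=w_k+p_k$, where $|S_k|=\beta$ and $p_k$ is any vector satisfying the residual condition $$\|\nabla^2R_{S_k}(w_k)p_k+\nabla R(w_k)\|\le\zeta\|\nabla R(w_k)\|$$ for a parameter $\zeta<1$. Then $$\mathbb{E}_k[\|w_{k+1}-w^*\|]\le\frac{M}{2\mu_\beta}\|w_k-w^*\|^2+\left(\frac{\sigma}{\mu_\beta\sqrt\beta}+\frac{L\zeta}{\mu_\beta}\right)\|w_k-w^*\|.$$ Consequently, if in addition Assumption B1 holds, $\beta\ge 64\sigma^2/\bar\mu^2$, $\zeta\le\frac{\mu_\beta}{8L}$, and $\|w_0-w^*\|\le\min\{\frac1{4C_1},\frac1{4\gamma C_1}\}$ with $C_1=\frac M{2\mu_\beta}$, then $\mathbb{E}[\|w_{k+1}-w^*\|]\le\frac12\mathbb{E}[\|w_k-w^*\|]$ for all $k\ge0$.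
   Context: Setting (finite sum): $R(w)=\frac1N\sum_{i=1}^NF_i(w)$ for $w\in\mathbb{R}^d$, each $F_i$ twice continuously differentiable. For an index multiset $S$, $\nabla^2R_S(w)=\frac1{|S|}\sum_{i\in S}\nabla^2F_i(w)$. At each iteration $S_k$ consists of $\beta$ indices drawn independently and uniformly from $\{1,\dots,N\}$, independent of the past; the full gradient $\nabla R(w_k)$ is used. $\mathbb{E}_k$ is expectation over $S_k$ conditional on $w_k$. $w^*$ is the unique minimizer of $R$. Assumption A1 (for $R$): for every positive integer $\beta$ there are $0<\mu_\beta\le L_\beta$ with $\mu_\beta I\preceq\nabla^2R_S(w)\preceq L_\beta I$ for all $w$ and all $|S|=\beta$; constants $0<\bar\mu\le\mu_\beta$, $L_\beta\le\bar L<\infty$; and $\mu I\preceq\nabla^2R(w)\preceq LI$ for all $w$. Assumption A3: $\|\nabla^2R(w)-\nabla^2R(z)\|\le M\|w-z\|$ for all $w,z$. Assumption A4: with $i$ uniform on $\{1,\dots,N\}$, $\|\mathbb{E}[(\nabla^2F_i(w)-\nabla^2R(w))^2]\|\le\sigma^2$ for all $w$. Assumption B1: there is $\gamma>0$ such that every iterate satisfies $\mathbb{E}[\|w_k-w^*\|^2]\le\gamma(\mathbb{E}[\|w_k-w^*\|])^2$. *)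

theory Defs
  imports "HOL-Analysis.Analysis" "HOL-Probability.Probability"
begin

text \<open>Indices of the component functions are 0, ..., N-1.
  A sample S of size beta is a list of beta indices (a multiset with order);
  the uniform distribution on such lists is exactly beta i.i.d. uniform draws.\<close>

definition samples :: "nat \<Rightarrow> nat \<Rightarrow> nat list set" where
  "samples N \<beta> = {S. length S = \<beta> \<and> set S \<subseteq> {..<N}}"

text \<open>Histories (S_{k-1}, ..., S_0) of k independent samples, newest first.\<close>
definition histories :: "nat \<Rightarrow> nat \<Rightarrow> nat \<Rightarrow> nat list list set" where
  "histories N \<beta> k = {h. length h = k \<and> set h \<subseteq> samples N \<beta>}"

definition Exp :: "'a set \<Rightarrow> ('a \<Rightarrow> real) \<Rightarrow> real" where
  "Exp A f = measure_pmf.expectation (pmf_of_set A) f"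

text \<open>Average over all N components, e.g. R, its gradient, its Hessian.\<close>
definition favg :: "nat \<Rightarrow> (nat \<Rightarrow> 'b::real_vector) \<Rightarrow> 'b" where
  "favg N f = (1 / real N) *\<^sub>R (\<Sum>i<N. f i)"

definition subHess :: "(nat \<Rightarrow> 'x \<Rightarrow> real^'n^'n) \<Rightarrow> nat list \<Rightarrow> 'x \<Rightarrow> real^'n^'n" where
  "subHess H S w = (1 / real (length S)) *\<^sub>R sum_list (map (\<lambda>i. H i w) S)"

definition loewner_le :: "real^'n^'n \<Rightarrow> real^'n^'n \<Rightarrow> bool" where
  "loewner_le A B \<longleftrightarrow> (\<forall>x. x \<bullet> (A *v x) \<le> x \<bullet> (B *v x))"

definition opnorm :: "real^'n^'n \<Rightarrow> real" where
  "opnorm A = onorm (\<lambda>x. A *v x)"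

text \<open>Iterates: w_0 = w0, w_{k+1} = w_k + p_k, where the step p may depend on the
  whole history h of previous samples and on the current sample S.\<close>
primrec traj :: "'v::real_vector \<Rightarrow> ('s list \<Rightarrow> 's \<Rightarrow> 'v) \<Rightarrow> 's list \<Rightarrow> 'v" where
  "traj w0 p [] = w0"
| "traj w0 p (S # h) = traj w0 p h + p h S"

end

theory Submission
  imports Defs
begin

text \<open>Write \<open>e = w - w\<^sup>*\<close>, \<open>g = \<nabla>R(w)\<close> and \<open>A = \<nabla>\<^sup>2R\<^sub>S(w)\<close>. The new error satisfies
  \<open>A (e + p) = (A - \<nabla>\<^sup>2R(w)) e + (\<nabla>\<^sup>2R(w) e - g) + (A p + g)\<close>.
  The first term is the Hessian sampling error: \<open>\<nabla>\<^sup>2R\<^sub>S(w)\<close> averages \<open>\<beta>\<close> independent draws,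
  so by A4 its mean is at most \<open>\<sigma> \<parallel>e\<parallel> / sqrt \<beta>\<close>. The second is the Taylor remainder of the
  gradient, at most \<open>M \<parallel>e\<parallel>\<^sup>2 / 2\<close> by A3. The third is the residual, at most
  \<open>\<zeta> \<parallel>g\<parallel> \<le> L \<zeta> \<parallel>e\<parallel>\<close>. Since \<open>A \<succeq> \<mu>\<^sub>\<beta> I\<close>, dividing by \<open>\<mu>\<^sub>\<beta>\<close> gives the one-step bound.

  Averaging over the history and using B1 for the second moment, \<open>a\<^sub>k = \<bbbE>\<parallel>e\<^sub>k\<parallel>\<close> satisfies
  \<open>a\<^sub>k\<^sub>+\<^sub>1 \<le> C\<^sub>1 \<gamma> a\<^sub>k\<^sup>2 + c a\<^sub>k\<close>, where the choices of \<open>\<beta>\<close> and \<open>\<zeta>\<close> make \<open>c \<le> 1/4\<close>.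
  By induction \<open>a\<^sub>k \<le> a\<^sub>0\<close>, so \<open>C\<^sub>1 \<gamma> a\<^sub>k \<le> 1/4\<close> and hence \<open>a\<^sub>k\<^sub>+\<^sub>1 \<le> a\<^sub>k / 2\<close>.\<close>

section \<open>Matrices and the Loewner order\<close>

lemma norm_matrix_vector_le_opnorm: "norm ((A::real^'n^'n) *v x) \<le> opnorm A * norm x"
  unfolding opnorm_def by (rule onorm) simp

lemma opnorm_nonneg: "0 \<le> opnorm (A::real^'n^'n)"
  unfolding opnorm_def by (rule onorm_pos_le) simp

lemma sum_matrix_vector_mult: "sum f I *v (x::real^'n) = (\<Sum>i\<in>I. (f i::real^'n^'n) *v x)"
proof (induction I rule: infinite_finite_induct)
  case (infinite A) then show ?case by simp
next
  case empty then show ?case by (simp add: matrix_vector_mult_0)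
next
  case (insert a F) then show ?case by (simp add: matrix_vector_mult_add_rdistrib)
qed

lemma favg_matrix_vector_mult:
  "favg N f *v (x::real^'n) = favg N (\<lambda>i. (f i::real^'n^'n) *v x)"
  unfolding favg_def by (simp add: sum_matrix_vector_mult scaleR_matrix_vector_assoc[symmetric])

lemma sum_list_matrix_vector_mult:
  "sum_list (map f S) *v (x::real^'n) = sum_list (map (\<lambda>i. (f i::real^'n^'n) *v x) S)"
  by (induction S) (simp_all add: matrix_vector_mult_0 matrix_vector_mult_add_rdistrib)

lemma inner_favg_right: "x \<bullet> favg N f = (1 / real N) * (\<Sum>i<N. x \<bullet> f i)"
  by (simp add: favg_def inner_sum_right)

lemma has_derivative_favg:
  "(\<And>i. i < N \<Longrightarrow> (f i has_derivative f' i) F) \<Longrightarrow>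
    ((\<lambda>x. favg N (\<lambda>i. f i x)) has_derivative (\<lambda>v. favg N (\<lambda>i. f' i v))) F"
  unfolding favg_def by (intro has_derivative_scaleR_right has_derivative_sum) auto

lemma has_derivative_favg_inner:
  assumes "\<And>i. i < N \<Longrightarrow> (f i has_derivative (\<lambda>v. G i x \<bullet> v)) F"
  shows "((\<lambda>x. favg N (\<lambda>i. f i x)) has_derivative (\<lambda>v. favg N (\<lambda>i. G i x) \<bullet> v)) F"
  by (rule has_derivative_eq_rhs[OF has_derivative_favg[OF assms]])
    (simp_all add: fun_eq_iff favg_def inner_sum_left)

lemma has_derivative_favg_matrix_vector_mult:
  fixes Hm :: "nat \<Rightarrow> 'a \<Rightarrow> real^'n^'n"
  assumes "\<And>i. i < N \<Longrightarrow> (f i has_derivative (\<lambda>v. Hm i x *v v)) F"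
  shows "((\<lambda>x. favg N (\<lambda>i. f i x)) has_derivative (\<lambda>v. favg N (\<lambda>i. Hm i x) *v v)) F"
  by (rule has_derivative_eq_rhs[OF has_derivative_favg[OF assms]])
    (simp_all add: fun_eq_iff favg_matrix_vector_mult)

lemma loewner_le_scaled_id_left_iff:
  "loewner_le (c *\<^sub>R mat 1) A \<longleftrightarrow> (\<forall>x. c * (norm x)\<^sup>2 \<le> x \<bullet> ((A::real^'n^'n) *v x))"
  unfolding loewner_le_def
  by (simp add: scaleR_matrix_vector_assoc[symmetric] power2_norm_eq_inner)

lemma loewner_le_scaled_id_right_iff:
  "loewner_le A (c *\<^sub>R mat 1) \<longleftrightarrow> (\<forall>x. x \<bullet> ((A::real^'n^'n) *v x) \<le> c * (norm x)\<^sup>2)"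
  unfolding loewner_le_def
  by (simp add: scaleR_matrix_vector_assoc[symmetric] power2_norm_eq_inner)

lemma norm_matrix_vector_ge_if_loewner_le:
  assumes "0 < c" "loewner_le (c *\<^sub>R mat 1) A"
  shows "c * norm x \<le> norm ((A::real^'n^'n) *v x)"
proof (cases "x = 0")
  case False
  have "c * (norm x)\<^sup>2 \<le> x \<bullet> (A *v x)"
    using assms(2) by (simp add: loewner_le_scaled_id_left_iff)
  also have "\<dots> \<le> norm x * norm (A *v x)" by (rule norm_cauchy_schwarz)
  finally show ?thesis using False by (simp add: power2_eq_square mult.assoc mult.left_commute)
qed simp

definition symmetric_matrix :: "real^'n^'n \<Rightarrow> bool" where
  "symmetric_matrix B \<longleftrightarrow> (\<forall>x y. x \<bullet> (B *v y) = y \<bullet> (B *v x))"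

lemma symmetric_matrix_diff:
  "symmetric_matrix A \<Longrightarrow> symmetric_matrix B \<Longrightarrow> symmetric_matrix (A - B)"
  unfolding symmetric_matrix_def by (simp add: matrix_vector_mult_diff_rdistrib inner_diff_right)

lemma symmetric_matrix_favg:
  "(\<And>i. i < N \<Longrightarrow> symmetric_matrix (B i)) \<Longrightarrow> symmetric_matrix (favg N B)"
  unfolding symmetric_matrix_def by (auto simp: favg_matrix_vector_mult inner_favg_right intro!: sum.cong)

text \<open>For a symmetric matrix the operator norm equals the numerical radius; we only need the
  bound, obtained by polarisation and testing against the direction of \<open>B *v x\<close>.\<close>

lemma symmetric_matrix_norm_le:
  assumes symm: "symmetric_matrix B" and quad: "\<And>x. \<bar>x \<bullet> (B *v x)\<bar> \<le> K * (norm x)\<^sup>2"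
  shows "norm ((B::real^'n^'n) *v x) \<le> K * norm x"
proof (cases "B *v x = 0")
  case True
  have "0 \<le> K * (norm x)\<^sup>2" using quad[of x] by simp
  then have "0 \<le> K * norm x" by (cases "x = 0") (auto simp: zero_le_mult_iff)
  then show ?thesis using True by simp
next
  case False
  have polarisation: "4 * (z \<bullet> (B *v x)) \<le> 2 * K * ((norm x)\<^sup>2 + (norm z)\<^sup>2)" for z
  proof -
    have "4 * (z \<bullet> (B *v x)) = (x + z) \<bullet> (B *v (x + z)) - (x - z) \<bullet> (B *v (x - z))"
      using symm unfolding symmetric_matrix_def
      by (simp add: matrix_vector_right_distrib matrix_vector_mult_diff_distrib
          inner_add_left inner_add_right inner_diff_left inner_diff_right)
    also have "\<dots> \<le> K * (norm (x + z))\<^sup>2 + K * (norm (x - z))\<^sup>2"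
      using quad[of "x + z"] quad[of "x - z"] by linarith
    also have "\<dots> = 2 * K * ((norm x)\<^sup>2 + (norm z)\<^sup>2)"
      by (simp add: power2_norm_eq_inner inner_add_left inner_add_right inner_diff_left
          inner_diff_right inner_commute algebra_simps)
    finally show ?thesis .
  qed
  define z where "z = (norm x / norm (B *v x)) *\<^sub>R (B *v x)"
  have "norm z = norm x" using False by (simp add: z_def)
  moreover have "z \<bullet> (B *v x) = norm x * norm (B *v x)"
    using False by (simp add: z_def power2_norm_eq_inner[symmetric] power2_eq_square)
  ultimately have "norm x * norm (B *v x) \<le> norm x * (K * norm x)"
    using polarisation[of z] by (simp add: power2_eq_square algebra_simps)
  moreover have "x \<noteq> 0" using False by auto
  ultimately show ?thesis by simp
qed

lemma norm_matrix_vector_le_if_loewner_between: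
  assumes "symmetric_matrix A" "0 \<le> c"
    and "loewner_le (c *\<^sub>R mat 1) A" "loewner_le A (L *\<^sub>R mat 1)"
  shows "norm ((A::real^'n^'n) *v x) \<le> L * norm x"
proof (rule symmetric_matrix_norm_le[OF assms(1)])
  fix y :: "real^'n"
  have "c * (norm y)\<^sup>2 \<le> y \<bullet> (A *v y)" "y \<bullet> (A *v y) \<le> L * (norm y)\<^sup>2"
    using assms(3,4) by (simp_all add: loewner_le_scaled_id_left_iff loewner_le_scaled_id_right_iff)
  moreover have "0 \<le> c * (norm y)\<^sup>2" using assms(2) by simp
  ultimately show "\<bar>y \<bullet> (A *v y)\<bar> \<le> L * (norm y)\<^sup>2" by linarith
qed

section \<open>Calculus along segments\<close>

lemma has_real_derivative_along_line:
  assumes "\<And>p. (f has_derivative (\<lambda>v. G p \<bullet> v)) (at p)"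
  shows "((\<lambda>s. f (a + s *\<^sub>R x)) has_real_derivative (G (a + s *\<^sub>R x) \<bullet> x)) (at s)"
proof -
  have "((\<lambda>s. a + s *\<^sub>R x) has_derivative (\<lambda>d. d *\<^sub>R x)) (at s)"
    by (auto intro!: derivative_eq_intros)
  from diff_chain_at[OF this assms]
  have "((\<lambda>s. f (a + s *\<^sub>R x)) has_derivative (\<lambda>d. G (a + s *\<^sub>R x) \<bullet> (d *\<^sub>R x))) (at s)"
    by (simp add: o_def)
  then show ?thesis unfolding has_field_derivative_def
    by (rule has_derivative_eq_rhs) (simp add: fun_eq_iff mult.commute)
qed

lemma has_real_derivative_inner_along_line:
  assumes "\<And>p. (G has_derivative (\<lambda>v. (Hm p::real^'n^'n) *v v)) (at p)"
  shows "((\<lambda>t. G (a + t *\<^sub>R y) \<bullet> x) has_real_derivative ((Hm (a + t *\<^sub>R y) *v y) \<bullet> x)) (at t)"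
proof -
  have "((\<lambda>s. a + s *\<^sub>R y) has_derivative (\<lambda>d. d *\<^sub>R y)) (at t)"
    by (auto intro!: derivative_eq_intros)
  from diff_chain_at[OF this assms]
  have "((\<lambda>s. G (a + s *\<^sub>R y)) has_derivative (\<lambda>d. d *\<^sub>R (Hm (a + t *\<^sub>R y) *v y))) (at t)"
    by (simp add: o_def matrix_scaleR_vector_ac scaleR_matrix_vector_assoc)
  then have "((\<lambda>s. G (a + s *\<^sub>R y) \<bullet> x) has_derivative
      (\<lambda>d. d *\<^sub>R (Hm (a + t *\<^sub>R y) *v y) \<bullet> x)) (at t)"
    by (auto intro!: derivative_eq_intros)
  then show ?thesis unfolding has_field_derivative_def
    by (rule has_derivative_eq_rhs) (simp add: fun_eq_iff mult.commute)
qed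

lemma mean_value_inner_along_segment:
  assumes "\<And>p. (G has_derivative (\<lambda>v. (Hm p::real^'n^'n) *v v)) (at p)"
  obtains \<xi> where "0 < \<xi>" "\<xi> < 1" "G (a + e) \<bullet> c - G a \<bullet> c = (Hm (a + \<xi> *\<^sub>R e) *v e) \<bullet> c"
  using MVT2[OF zero_less_one has_real_derivative_inner_along_line[OF assms, of a e c]] by auto

lemma second_difference_mean_value:
  assumes df: "\<And>p. (f has_derivative (\<lambda>v. G p \<bullet> v)) (at p)"
    and dG: "\<And>p. (G has_derivative (\<lambda>v. (Hm p::real^'n^'n) *v v)) (at p)"
    and h: "0 < h"
  obtains z where "norm (z - w) \<le> h * (norm x + norm y)"
    "f (w + h *\<^sub>R x + h *\<^sub>R y) - f (w + h *\<^sub>R x) - f (w + h *\<^sub>R y) + f w = h * (h * ((Hm z *v y) \<bullet> x))"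
proof -
  define a where "a s = f ((w + h *\<^sub>R y) + s *\<^sub>R x) - f (w + s *\<^sub>R x)" for s
  have "(a has_real_derivative (G ((w + h *\<^sub>R y) + s *\<^sub>R x) \<bullet> x - G (w + s *\<^sub>R x) \<bullet> x)) (at s)" for s
    unfolding a_def by (intro derivative_intros has_real_derivative_along_line[OF df])
  from MVT2[OF h this] obtain \<xi> where \<xi>: "0 < \<xi>" "\<xi> < h"
    and a_diff: "a h - a 0 = h * (G ((w + \<xi> *\<^sub>R x) + h *\<^sub>R y) \<bullet> x - G (w + \<xi> *\<^sub>R x) \<bullet> x)"
    by (auto simp: algebra_simps)
  define b where "b t = G ((w + \<xi> *\<^sub>R x) + t *\<^sub>R y) \<bullet> x" for t
  from MVT2[OF h has_real_derivative_inner_along_line[OF dG, of "w + \<xi> *\<^sub>R x" y x]]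
  obtain \<eta> where \<eta>: "0 < \<eta>" "\<eta> < h"
    and b_diff: "b h - b 0 = h * ((Hm ((w + \<xi> *\<^sub>R x) + \<eta> *\<^sub>R y) *v y) \<bullet> x)"
    unfolding b_def by auto
  define z where "z = (w + \<xi> *\<^sub>R x) + \<eta> *\<^sub>R y"
  have "norm (z - w) \<le> norm (\<xi> *\<^sub>R x) + norm (\<eta> *\<^sub>R y)"
    unfolding z_def by (metis add_diff_cancel_left' add.assoc norm_triangle_ineq)
  also have "\<dots> \<le> h * norm x + h * norm y"
    using \<xi> \<eta> by (intro add_mono) (auto intro: mult_right_mono)
  finally have "norm (z - w) \<le> h * (norm x + norm y)" by (simp add: algebra_simps)
  moreover have "f (w + h *\<^sub>R x + h *\<^sub>R y) - f (w + h *\<^sub>R x) - f (w + h *\<^sub>R y) + f w = a h - a 0"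
    unfolding a_def by (simp add: algebra_simps)
  moreover have "a h - a 0 = h * (h * ((Hm z *v y) \<bullet> x))"
    using a_diff b_diff unfolding b_def z_def by simp
  ultimately show ?thesis using that by simp
qed

lemma continuous_on_matrix_inner:
  "continuous_on UNIV Hm \<Longrightarrow> continuous_on UNIV (\<lambda>z. ((Hm z::real^'n^'n) *v y) \<bullet> x)"
proof -
  assume "continuous_on UNIV Hm"
  moreover have "linear (\<lambda>A::real^'n^'n. A *v y)"
    by (rule linearI) (simp_all add: matrix_vector_mult_add_rdistrib scaleR_matrix_vector_assoc)
  then have "bounded_linear (\<lambda>A::real^'n^'n. A *v y)"
    by (simp add: linear_conv_bounded_linear)
  ultimately have "continuous_on UNIV (\<lambda>z. Hm z *v y)"
    using bounded_linear.continuous_on by blast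
  then show ?thesis by (intro continuous_intros)
qed

text \<open>Schwarz's theorem: the mixed second difference is symmetric in \<open>x\<close> and \<open>y\<close>, so by
  continuity of the Hessian the two bilinear forms agree at \<open>w\<close>.\<close>

lemma hessian_symmetric:
  assumes df: "\<And>p. (f has_derivative (\<lambda>v. G p \<bullet> v)) (at p)"
    and dG: "\<And>p. (G has_derivative (\<lambda>v. (Hm p::real^'n^'n) *v v)) (at p)"
    and cont: "continuous_on UNIV Hm"
  shows "symmetric_matrix (Hm w)"
  unfolding symmetric_matrix_def
proof (intro allI, rule ccontr)
  fix x y :: "real^'n"
  define \<phi> where "\<phi> z = (Hm z *v y) \<bullet> x" for z
  define \<psi> where "\<psi> z = (Hm z *v x) \<bullet> y" for z
  assume "x \<bullet> (Hm w *v y) \<noteq> y \<bullet> (Hm w *v x)"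
  then have d: "0 < \<bar>\<phi> w - \<psi> w\<bar>" by (simp add: \<phi>_def \<psi>_def inner_commute)
  have "isCont \<phi> w" "isCont \<psi> w"
    using continuous_on_matrix_inner[OF cont] unfolding \<phi>_def \<psi>_def
    by (simp_all add: continuous_on_eq_continuous_at)
  then obtain \<delta> where \<delta>: "0 < \<delta>"
    and close: "\<And>z. dist z w < \<delta> \<Longrightarrow> \<bar>\<phi> z - \<phi> w\<bar> < \<bar>\<phi> w - \<psi> w\<bar> / 2 \<and> \<bar>\<psi> z - \<psi> w\<bar> < \<bar>\<phi> w - \<psi> w\<bar> / 2"
    using d unfolding continuous_at_eps_delta dist_real_def
    by (metis half_gt_zero min_less_iff_conj min.strict_boundedE)
  define h where "h = \<delta> / (2 * (norm x + norm y + 1))"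
  have denom: "0 < 2 * (norm x + norm y + 1)" by (simp add: add_nonneg_pos)
  have h: "0 < h" using \<delta> denom by (simp add: h_def)
  have "h * (norm x + norm y) < h * (2 * (norm x + norm y + 1))"
    using h by (intro mult_strict_left_mono) (auto simp: add_nonneg_pos)
  also have "\<dots> = \<delta>" using denom by (simp add: h_def)
  finally have h_small: "h * (norm x + norm y) < \<delta>" .
  obtain z1 where z1: "norm (z1 - w) \<le> h * (norm x + norm y)"
    "f (w + h *\<^sub>R x + h *\<^sub>R y) - f (w + h *\<^sub>R x) - f (w + h *\<^sub>R y) + f w = h * (h * \<phi> z1)"
    using second_difference_mean_value[OF df dG h, of w x y] unfolding \<phi>_def by blast
  obtain z2 where z2: "norm (z2 - w) \<le> h * (norm y + norm x)"
    "f (w + h *\<^sub>R y + h *\<^sub>R x) - f (w + h *\<^sub>R y) - f (w + h *\<^sub>R x) + f w = h * (h * \<psi> z2)"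
    using second_difference_mean_value[OF df dG h, of w y x] unfolding \<psi>_def by blast
  have "h * (h * \<phi> z1) = h * (h * \<psi> z2)" using z1(2) z2(2) by (simp add: algebra_simps)
  then have "\<phi> z1 = \<psi> z2" using h by simp
  moreover have "dist z1 w < \<delta>" "dist z2 w < \<delta>"
    using z1(1) z2(1) h_small by (simp_all add: dist_norm add.commute)
  then have "\<bar>\<phi> z1 - \<phi> w\<bar> < \<bar>\<phi> w - \<psi> w\<bar> / 2" "\<bar>\<psi> z2 - \<psi> w\<bar> < \<bar>\<phi> w - \<psi> w\<bar> / 2"
    using close by blast+
  ultimately show False by (simp add: abs_if split: if_splits)
qed

lemma nonneg_if_opnorm_lipschitz:
  fixes Hm :: "real^'n \<Rightarrow> real^'m^'m"
  assumes "\<And>w z. opnorm (Hm w - Hm z) \<le> M * norm (w - z)"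
  shows "0 \<le> M"
proof -
  obtain u :: "real^'n" where u: "u \<noteq> 0" using zero_neq_one by blast
  have "0 \<le> M * norm u" using assms[of u 0] opnorm_nonneg[of "Hm u - Hm 0"] by simp
  then show ?thesis using u by (simp add: zero_le_mult_iff)
qed

text \<open>The remainder is tested against its own direction \<open>c\<close>: along the segment from \<open>u\<close> to \<open>w\<close>
  the function \<open>chi\<close> has nonpositive derivative at the mean value point by the Lipschitz bound.\<close>

lemma gradient_taylor_remainder_le:
  assumes dG: "\<And>p. (G has_derivative (\<lambda>v. (Hm p::real^'n^'n) *v v)) (at p)"
    and lip: "\<And>w z. opnorm (Hm w - Hm z) \<le> M * norm (w - z)"
  shows "norm (G w - G u - Hm w *v (w - u)) \<le> M / 2 * (norm (w - u))\<^sup>2"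
proof (cases "G w - G u - Hm w *v (w - u) = 0")
  case True
  then show ?thesis using nonneg_if_opnorm_lipschitz[OF lip] by simp
next
  case False
  define e where "e = w - u"
  define r where "r = G w - G u - Hm w *v e"
  define c where "c = (1 / norm r) *\<^sub>R r"
  have norm_c: "norm c = 1" using False by (simp add: c_def r_def e_def)
  define K where "K = M * (norm e)\<^sup>2"
  define chi where "chi t = G (u + t *\<^sub>R e) \<bullet> c - t * ((Hm w *v e) \<bullet> c) + K * (1 - t)\<^sup>2 / 2" for t
  have "(chi has_real_derivative
      ((Hm (u + t *\<^sub>R e) *v e) \<bullet> c - (Hm w *v e) \<bullet> c - K * (1 - t))) (at t)" for t
    unfolding chi_def
    by (auto intro!: derivative_eq_intros has_real_derivative_inner_along_line[OF dG]
        simp: field_simps power2_eq_square)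
  from MVT2[OF zero_less_one this] obtain \<xi> where \<xi>: "0 < \<xi>" "\<xi> < 1"
    and chi_diff: "chi 1 - chi 0 = (Hm (u + \<xi> *\<^sub>R e) *v e) \<bullet> c - (Hm w *v e) \<bullet> c - K * (1 - \<xi>)"
    by auto
  have "(Hm (u + \<xi> *\<^sub>R e) *v e) \<bullet> c - (Hm w *v e) \<bullet> c = ((Hm (u + \<xi> *\<^sub>R e) - Hm w) *v e) \<bullet> c"
    by (simp add: matrix_vector_mult_diff_rdistrib inner_diff_left)
  also have "\<dots> \<le> norm ((Hm (u + \<xi> *\<^sub>R e) - Hm w) *v e)"
    using norm_cauchy_schwarz[of _ c] norm_c by simp
  also have "\<dots> \<le> opnorm (Hm (u + \<xi> *\<^sub>R e) - Hm w) * norm e"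
    by (rule norm_matrix_vector_le_opnorm)
  also have "\<dots> \<le> M * norm (u + \<xi> *\<^sub>R e - w) * norm e"
    by (rule mult_right_mono[OF lip]) simp
  also have "u + \<xi> *\<^sub>R e - w = (\<xi> - 1) *\<^sub>R e" by (simp add: e_def algebra_simps)
  also have "M * norm ((\<xi> - 1) *\<^sub>R e) * norm e = K * (1 - \<xi>)"
    using \<xi> by (simp add: K_def power2_eq_square)
  finally have "chi 1 - chi 0 \<le> 0" using chi_diff by simp
  then have "r \<bullet> c \<le> K / 2"
    unfolding chi_def r_def by (simp add: e_def inner_diff_left)
  moreover have "r \<bullet> c = norm r"
    unfolding c_def by (simp add: power2_norm_eq_inner[symmetric] power2_eq_square)
  ultimately show ?thesis unfolding r_def K_def e_def by simp
qed

lemma gradient_strongly_monotone: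
  assumes dG: "\<And>p. (G has_derivative (\<lambda>v. (Hm p::real^'n^'n) *v v)) (at p)"
    and lower: "\<And>p. loewner_le (\<mu> *\<^sub>R mat 1) (Hm p)"
  shows "\<mu> * (norm (w - u))\<^sup>2 \<le> (G w - G u) \<bullet> (w - u)"
proof -
  obtain \<xi> where mvt: "G (u + (w - u)) \<bullet> (w - u) - G u \<bullet> (w - u)
      = (Hm (u + \<xi> *\<^sub>R (w - u)) *v (w - u)) \<bullet> (w - u)"
    using mean_value_inner_along_segment[OF dG] by blast
  have "\<mu> * (norm (w - u))\<^sup>2 \<le> (w - u) \<bullet> (Hm (u + \<xi> *\<^sub>R (w - u)) *v (w - u))"
    using lower by (simp add: loewner_le_scaled_id_left_iff)
  also have "\<dots> = G (u + (w - u)) \<bullet> (w - u) - G u \<bullet> (w - u)"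
    using mvt by (simp add: inner_commute[of "w - u"])
  also have "\<dots> = (G w - G u) \<bullet> (w - u)" by (simp add: inner_diff_left)
  finally show ?thesis .
qed

lemma gradient_lipschitz:
  assumes dG: "\<And>p. (G has_derivative (\<lambda>v. (Hm p::real^'n^'n) *v v)) (at p)"
    and bound: "\<And>p x. norm (Hm p *v x) \<le> L * norm x"
  shows "norm (G w - G u) \<le> L * norm (w - u)"
proof (cases "G w = G u")
  case True
  obtain x :: "real^'n" where "x \<noteq> 0" using zero_neq_one by blast
  moreover have "0 \<le> L * norm x" using bound[of u x] norm_ge_zero[of "Hm u *v x"] by linarith
  ultimately show ?thesis using True by (simp add: zero_le_mult_iff)
next
  case False
  define c where "c = (1 / norm (G w - G u)) *\<^sub>R (G w - G u)"
  obtain \<xi> where "G (u + (w - u)) \<bullet> c - G u \<bullet> c = (Hm (u + \<xi> *\<^sub>R (w - u)) *v (w - u)) \<bullet> c"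
    using mean_value_inner_along_segment[OF dG] by blast
  moreover have "(G w - G u) \<bullet> c = norm (G w - G u)"
    unfolding c_def by (simp add: power2_norm_eq_inner[symmetric] power2_eq_square)
  ultimately have "norm (G w - G u) = (Hm (u + \<xi> *\<^sub>R (w - u)) *v (w - u)) \<bullet> c"
    by (simp add: inner_diff_left)
  also have "\<dots> \<le> norm (Hm (u + \<xi> *\<^sub>R (w - u)) *v (w - u)) * norm c"
    by (rule norm_cauchy_schwarz)
  also have "\<dots> \<le> L * norm (w - u)" using False bound by (simp add: c_def)
  finally show ?thesis .
qed

lemma gradient_eq_0_at_minimum:
  assumes "(f has_derivative (\<lambda>v. G \<bullet> v)) (at x)" and "\<And>y. f x \<le> f y"
  shows "G = 0"
proof -
  have "(\<lambda>v. G \<bullet> v) = (\<lambda>v. 0)"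
    using assms by (intro has_derivative_local_min) auto
  then have "G \<bullet> G = 0" by meson
  then show ?thesis by simp
qed

section \<open>Uniform expectation over lists of samples\<close>

definition lists_of_length :: "'a set \<Rightarrow> nat \<Rightarrow> 'a list set" where
  "lists_of_length A k = {xs. length xs = k \<and> set xs \<subseteq> A}"

lemma samples_eq_lists_of_length: "samples N b = lists_of_length {..<N} b"
  unfolding samples_def lists_of_length_def by simp

lemma histories_eq_lists_of_length: "histories N b k = lists_of_length (samples N b) k"
  unfolding histories_def lists_of_length_def by simp

lemma lists_of_length_0 [simp]: "lists_of_length A 0 = {[]}"
  unfolding lists_of_length_def by auto

lemma finite_lists_of_length: "finite A \<Longrightarrow> finite (lists_of_length A k)"
  unfolding lists_of_length_def using finite_lists_length_eq[of A k] by (simp add: conj_commute)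

lemma card_lists_of_length: "finite A \<Longrightarrow> card (lists_of_length A k) = card A ^ k"
  unfolding lists_of_length_def using card_lists_length_eq[of A k] by (simp add: conj_commute)

lemma lists_of_length_nonempty: "A \<noteq> {} \<Longrightarrow> lists_of_length A k \<noteq> {}"
proof -
  assume "A \<noteq> {}"
  then obtain a where "a \<in> A" by blast
  then have "replicate k a \<in> lists_of_length A k" unfolding lists_of_length_def by auto
  then show ?thesis by blast
qed

lemma lists_of_length_Suc:
  "lists_of_length A (Suc k) = (\<lambda>(x, xs). x # xs) ` (A \<times> lists_of_length A k)"
proof
  show "lists_of_length A (Suc k) \<subseteq> (\<lambda>(x, xs). x # xs) ` (A \<times> lists_of_length A k)"
  proof
    fix ys assume "ys \<in> lists_of_length A (Suc k)"
    then obtain x xs where "ys = x # xs" "x \<in> A" "xs \<in> lists_of_length A k"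
      unfolding lists_of_length_def by (cases ys) auto
    then show "ys \<in> (\<lambda>(x, xs). x # xs) ` (A \<times> lists_of_length A k)" by force
  qed
qed (auto simp: lists_of_length_def)

lemma sum_lists_of_length_Suc:
  "(\<Sum>ys\<in>lists_of_length A (Suc k). f ys) = (\<Sum>x\<in>A. \<Sum>xs\<in>lists_of_length A k. f (x # xs))"
proof -
  have "inj_on (\<lambda>(x, xs). x # xs) (A \<times> lists_of_length A k)" by (auto simp: inj_on_def)
  then have "(\<Sum>ys\<in>lists_of_length A (Suc k). f ys) = (\<Sum>(x, xs)\<in>A \<times> lists_of_length A k. f (x # xs))"
    unfolding lists_of_length_Suc by (simp add: sum.reindex case_prod_unfold)
  then show ?thesis by (simp add: sum.cartesian_product)
qed

lemma Exp_eq_average: "finite A \<Longrightarrow> A \<noteq> {} \<Longrightarrow> Exp A f = (\<Sum>x\<in>A. f x) / real (card A)"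
  unfolding Exp_def by (rule integral_pmf_of_set)

lemma Exp_singleton [simp]: "Exp {a} f = f a"
  by (simp add: Exp_eq_average)

context
  fixes A :: "'a set"
  assumes finite: "finite A" and nonempty: "A \<noteq> {}"
begin

lemma Exp_mono: "(\<And>x. x \<in> A \<Longrightarrow> f x \<le> g x) \<Longrightarrow> Exp A f \<le> Exp A g"
  using finite nonempty by (simp add: Exp_eq_average sum_mono divide_right_mono)

lemma Exp_nonneg: "(\<And>x. x \<in> A \<Longrightarrow> 0 \<le> f x) \<Longrightarrow> 0 \<le> Exp A f"
  using finite nonempty by (simp add: Exp_eq_average sum_nonneg)

lemma Exp_add: "Exp A (\<lambda>x. f x + g x) = Exp A f + Exp A g"
  using finite nonempty by (simp add: Exp_eq_average sum.distrib add_divide_distrib)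

lemma Exp_cmult: "Exp A (\<lambda>x. c * f x) = c * Exp A f"
  using finite nonempty by (simp add: Exp_eq_average sum_distrib_left[symmetric])

lemma Exp_const: "Exp A (\<lambda>x. c) = c"
  using finite nonempty by (simp add: Exp_eq_average)

lemma Exp_le_sqrt_Exp_square: "Exp A f \<le> sqrt (Exp A (\<lambda>x. (f x)\<^sup>2))"
proof -
  have card: "real (card A) > 0" using finite nonempty by (simp add: card_gt_0_iff)
  have "(\<Sum>x\<in>A. f x * 1)\<^sup>2 \<le> (\<Sum>x\<in>A. (f x)\<^sup>2) * (\<Sum>x\<in>A. 1\<^sup>2)"
    by (rule Cauchy_Schwarz_ineq_sum)
  then have "((\<Sum>x\<in>A. f x) / real (card A))\<^sup>2 \<le> (\<Sum>x\<in>A. (f x)\<^sup>2) / real (card A)"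
    using card by (simp add: power_divide field_simps power2_eq_square)
  then have "(Exp A f)\<^sup>2 \<le> Exp A (\<lambda>x. (f x)\<^sup>2)"
    using finite nonempty by (simp add: Exp_eq_average)
  then show ?thesis using real_le_rsqrt by blast
qed

text \<open>This is where the independence of successive samples enters.\<close>

lemma Exp_lists_of_length_Suc:
  "Exp (lists_of_length A (Suc k)) f = Exp (lists_of_length A k) (\<lambda>xs. Exp A (\<lambda>x. f (x # xs)))"
proof -
  have lists: "finite (lists_of_length A k)" "lists_of_length A k \<noteq> {}"
    "finite (lists_of_length A (Suc k))" "lists_of_length A (Suc k) \<noteq> {}"
    using finite nonempty finite_lists_of_length lists_of_length_nonempty by blast+
  have card: "real (card A) > 0" using finite nonempty by (simp add: card_gt_0_iff)
  have "Exp (lists_of_length A (Suc k)) f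
      = (\<Sum>x\<in>A. \<Sum>xs\<in>lists_of_length A k. f (x # xs)) / (real (card A) * real (card A) ^ k)"
    using lists finite by (simp add: Exp_eq_average sum_lists_of_length_Suc card_lists_of_length)
  also have "\<dots> = (\<Sum>xs\<in>lists_of_length A k. (\<Sum>x\<in>A. f (x # xs)) / real (card A)) / real (card A) ^ k"
    using card by (simp add: sum.swap[of _ A] sum_divide_distrib[symmetric] field_simps)
  also have "\<dots> = Exp (lists_of_length A k) (\<lambda>xs. Exp A (\<lambda>x. f (x # xs)))"
    using lists finite nonempty by (simp add: Exp_eq_average card_lists_of_length)
  finally show ?thesis .
qed

end

section \<open>Variance of the subsampled Hessian\<close>

text \<open>The cross terms of the sum of independent draws cancel because \<open>D\<close> is centred.\<close>

lemma sum_samples_norm_sum_list_square: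
  fixes D :: "nat \<Rightarrow> real^'n"
  assumes centred: "(\<Sum>i<N. D i) = 0"
  shows "real N * (\<Sum>S\<in>samples N b. (norm (sum_list (map D S)))\<^sup>2)
         = real b * real N ^ b * (\<Sum>i<N. (norm (D i))\<^sup>2)"
proof (induction b)
  case 0 then show ?case by (simp add: samples_eq_lists_of_length)
next
  case (Suc b)
  let ?v = "\<lambda>S. sum_list (map D S)"
  let ?A = "samples N b"
  have card: "card ?A = N ^ b" by (simp add: samples_eq_lists_of_length card_lists_of_length)
  have "(\<Sum>S\<in>samples N (Suc b). (norm (?v S))\<^sup>2) = (\<Sum>i<N. \<Sum>S\<in>?A. (norm (D i + ?v S))\<^sup>2)"
    unfolding samples_eq_lists_of_length by (simp add: sum_lists_of_length_Suc)
  also have "\<dots> = (\<Sum>i<N. \<Sum>S\<in>?A. (norm (D i))\<^sup>2 + 2 * (D i \<bullet> ?v S) + (norm (?v S))\<^sup>2)"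
    by (simp add: power2_norm_eq_inner inner_add_left inner_add_right inner_commute algebra_simps)
  also have "\<dots> = (\<Sum>i<N. real (N ^ b) * (norm (D i))\<^sup>2) + 2 * ((\<Sum>i<N. D i) \<bullet> (\<Sum>S\<in>?A. ?v S))
      + real N * (\<Sum>S\<in>?A. (norm (?v S))\<^sup>2)"
    using sum.swap[where A="{..<N}" and B="?A" and g="\<lambda>i S. D i \<bullet> ?v S"]
    by (simp add: sum.distrib card sum_distrib_left[symmetric] inner_sum_left inner_sum_right)
  also have "\<dots> = real (Suc b) * real N ^ b * (\<Sum>i<N. (norm (D i))\<^sup>2)"
    using Suc centred by (simp add: sum_distrib_left algebra_simps)
  finally show ?case by (simp add: algebra_simps)
qed

lemma sum_deviation_from_favg:
  "N \<ge> 1 \<Longrightarrow> (\<Sum>i<N. f i - favg N f) = (0::'a::real_vector)"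
  by (simp add: favg_def sum_subtractf sum_constant_scaleR)

lemma subHess_minus_matrix_vector_mult:
  assumes "length S \<ge> 1"
  shows "(subHess H S w - C) *v x = (1 / real (length S)) *\<^sub>R sum_list (map (\<lambda>i. (H i w - C) *v x) S)"
proof -
  have "S \<noteq> []" using assms by auto
  moreover have "sum_list (map (\<lambda>i. (H i w - C) *v x) S)
      = sum_list (map (\<lambda>i. H i w *v x) S) - real (length S) *\<^sub>R (C *v x)"
    by (induction S) (simp_all add: matrix_vector_mult_diff_rdistrib algebra_simps)
  ultimately show ?thesis
    by (simp add: subHess_def matrix_vector_mult_diff_rdistrib sum_list_matrix_vector_mult
        scaleR_matrix_vector_assoc[symmetric] scaleR_diff_right)
qed

lemma sum_norm_square_le_opnorm_favg_square:
  assumes "N \<ge> 1" "\<And>i. i < N \<Longrightarrow> symmetric_matrix (B i)"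
  shows "(\<Sum>i<N. (norm (B i *v x))\<^sup>2) \<le> real N * (opnorm (favg N (\<lambda>i. B i ** B i)) * (norm x)\<^sup>2)"
proof -
  have "x \<bullet> (favg N (\<lambda>i. B i ** B i) *v x) \<le> norm x * norm (favg N (\<lambda>i. B i ** B i) *v x)"
    by (rule norm_cauchy_schwarz)
  also have "\<dots> \<le> norm x * (opnorm (favg N (\<lambda>i. B i ** B i)) * norm x)"
    by (intro mult_left_mono norm_matrix_vector_le_opnorm) simp
  finally have quadratic_form:
    "x \<bullet> (favg N (\<lambda>i. B i ** B i) *v x) \<le> opnorm (favg N (\<lambda>i. B i ** B i)) * (norm x)\<^sup>2"
    by (simp add: power2_eq_square algebra_simps)
  have "(\<Sum>i<N. (norm (B i *v x))\<^sup>2) = (\<Sum>i<N. x \<bullet> ((B i ** B i) *v x))"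
    using assms(2) unfolding symmetric_matrix_def
    by (intro sum.cong) (simp_all add: power2_norm_eq_inner matrix_vector_mul_assoc[symmetric])
  also have "\<dots> = real N * (x \<bullet> (favg N (\<lambda>i. B i ** B i) *v x))"
    using assms(1) by (simp add: favg_matrix_vector_mult inner_favg_right)
  also have "\<dots> \<le> real N * (opnorm (favg N (\<lambda>i. B i ** B i)) * (norm x)\<^sup>2)"
    using quadratic_form by (rule mult_left_mono) simp
  finally show ?thesis .
qed

lemma Exp_norm_subHess_deviation_le:
  fixes H :: "nat \<Rightarrow> 'x \<Rightarrow> real^'n^'n" and w :: 'x and N b :: nat
  defines "Hw \<equiv> favg N (\<lambda>i. H i w)"
  assumes N: "N \<ge> 1" and b: "b \<ge> 1" and sigma: "0 \<le> \<sigma>"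
    and symm: "\<And>i. i < N \<Longrightarrow> symmetric_matrix (H i w)"
    and var: "opnorm (favg N (\<lambda>i. (H i w - Hw) ** (H i w - Hw))) \<le> \<sigma>\<^sup>2"
  shows "Exp (samples N b) (\<lambda>S. norm ((subHess H S w - Hw) *v x)) \<le> \<sigma> / sqrt (real b) * norm x"
proof -
  define D where "D i = (H i w - Hw) *v x" for i
  define v where "v S = sum_list (map D S)" for S
  have "{..<N} \<noteq> {}" using N by (simp add: lessThan_empty_iff)
  then have samples: "finite (samples N b)" "samples N b \<noteq> {}"
    by (simp_all add: samples_eq_lists_of_length finite_lists_of_length lists_of_length_nonempty)
  have card: "card (samples N b) = N ^ b"
    by (simp add: samples_eq_lists_of_length card_lists_of_length)
  have "(\<Sum>i<N. D i) = (\<Sum>i<N. H i w - Hw) *v x"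
    by (simp add: D_def sum_matrix_vector_mult)
  then have centred: "(\<Sum>i<N. D i) = 0"
    using N by (simp add: Hw_def sum_deviation_from_favg matrix_vector_mult_0)
  have "(\<Sum>i<N. (norm (D i))\<^sup>2) \<le> real N * (opnorm (favg N (\<lambda>i. (H i w - Hw) ** (H i w - Hw))) * (norm x)\<^sup>2)"
    unfolding D_def using N symm symmetric_matrix_favg[of N "\<lambda>i. H i w"]
    by (intro sum_norm_square_le_opnorm_favg_square) (auto simp: Hw_def symmetric_matrix_diff)
  also have "\<dots> \<le> real N * (\<sigma>\<^sup>2 * (norm x)\<^sup>2)"
    using var by (intro mult_left_mono mult_right_mono) auto
  finally have sum_D: "(\<Sum>i<N. (norm (D i))\<^sup>2) \<le> real N * (\<sigma>\<^sup>2 * (norm x)\<^sup>2)" .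
  have "Exp (samples N b) (\<lambda>S. (norm (v S))\<^sup>2) = real b * ((\<Sum>i<N. (norm (D i))\<^sup>2) / real N)"
    using sum_samples_norm_sum_list_square[OF centred, of b] samples card N
    by (simp add: Exp_eq_average v_def field_simps)
  also have "\<dots> \<le> real b * (\<sigma>\<^sup>2 * (norm x)\<^sup>2)"
    using sum_D N by (intro mult_left_mono) (simp_all add: field_simps)
  finally have second_moment: "Exp (samples N b) (\<lambda>S. (norm (v S))\<^sup>2) \<le> real b * (\<sigma>\<^sup>2 * (norm x)\<^sup>2)" .
  have "Exp (samples N b) (\<lambda>S. norm ((subHess H S w - Hw) *v x)) = Exp (samples N b) (\<lambda>S. (1 / real b) * norm (v S))"
    using b unfolding Exp_eq_average[OF samples]
    by (intro arg_cong2[where f="(/)"] sum.cong)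
      (auto simp: samples_def subHess_minus_matrix_vector_mult v_def D_def[abs_def])
  also have "\<dots> = (1 / real b) * Exp (samples N b) (\<lambda>S. norm (v S))"
    by (rule Exp_cmult[OF samples])
  also have "\<dots> \<le> (1 / real b) * sqrt (real b * (\<sigma>\<^sup>2 * (norm x)\<^sup>2))"
    using Exp_le_sqrt_Exp_square[OF samples] second_moment
    by (intro mult_left_mono) (auto intro: order_trans real_sqrt_le_mono)
  also have "\<dots> = \<sigma> / sqrt (real b) * norm x"
    using b sigma by (simp add: real_sqrt_mult field_simps real_sqrt_divide)
  finally show ?thesis .
qed

section \<open>One inexact Newton step\<close>

lemma inexact_newton_step_error_le:
  fixes A Hw :: "real^'n^'n"
  assumes coercive: "\<And>v. m * norm v \<le> norm (A *v v)"
    and taylor: "norm (g - Hw *v e) \<le> M / 2 * (norm e)\<^sup>2"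
    and grad_bound: "norm g \<le> L * norm e"
    and grad_zero: "g = 0 \<Longrightarrow> e = 0"
    and residual: "norm (A *v q + g) \<le> \<zeta> * norm g"
  shows "m * norm (e + q) \<le> norm ((A - Hw) *v e) + M / 2 * (norm e)\<^sup>2 + L * \<zeta> * norm e"
proof -
  have residual_bound: "\<zeta> * norm g \<le> L * \<zeta> * norm e"
  proof (cases "\<zeta> \<ge> 0")
    case True
    then show ?thesis using mult_left_mono[OF grad_bound True] by (simp add: algebra_simps)
  next
    case False
    have "0 \<le> \<zeta> * norm g" using norm_ge_zero residual by (rule order_trans)
    then have "g = 0" using False by (simp add: zero_le_mult_iff)
    then show ?thesis using grad_zero by simp
  qed
  have decomposition: "A *v (e + q) = ((A - Hw) *v e + (Hw *v e - g)) + (A *v q + g)"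
    by (simp add: matrix_vector_right_distrib matrix_vector_mult_diff_rdistrib algebra_simps)
  have "norm (A *v (e + q)) \<le> norm ((A - Hw) *v e) + norm (Hw *v e - g) + norm (A *v q + g)"
    unfolding decomposition using norm_triangle_ineq[of "(A - Hw) *v e" "Hw *v e - g"]
      norm_triangle_ineq[of "(A - Hw) *v e + (Hw *v e - g)" "A *v q + g"] by linarith
  then show ?thesis
    using coercive[of "e + q"] taylor residual residual_bound norm_minus_commute[of g "Hw *v e"]
    by linarith
qed

lemma Exp_newton_step_error_le:
  fixes H :: "nat \<Rightarrow> real^'n \<Rightarrow> real^'n^'n" and G :: "real^'n \<Rightarrow> real^'n"
    and N b :: nat
  defines "Hb \<equiv> \<lambda>p. favg N (\<lambda>i. H i p)"
  assumes N: "N \<ge> 1" and b: "b \<ge> 1" and sigma: "0 \<le> \<sigma>" and m: "0 < m" and \<mu>: "0 < \<mu>"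
    and dG: "\<And>p. (G has_derivative (\<lambda>v. Hb p *v v)) (at p)"
    and G_wstar: "G wstar = 0"
    and symm: "\<And>i p. i < N \<Longrightarrow> symmetric_matrix (H i p)"
    and lower: "\<And>p. loewner_le (\<mu> *\<^sub>R mat 1) (Hb p)"
    and upper: "\<And>p. loewner_le (Hb p) (L *\<^sub>R mat 1)"
    and lip: "\<And>p z. opnorm (Hb p - Hb z) \<le> M * norm (p - z)"
    and var: "opnorm (favg N (\<lambda>i. (H i w - Hb w) ** (H i w - Hb w))) \<le> \<sigma>\<^sup>2"
    and sub_lower: "\<And>S. S \<in> samples N b \<Longrightarrow> loewner_le (m *\<^sub>R mat 1) (subHess H S w)"
    and residual: "\<And>S. S \<in> samples N b \<Longrightarrow> norm (subHess H S w *v q S + G w) \<le> \<zeta> * norm (G w)"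
  shows "Exp (samples N b) (\<lambda>S. norm (w + q S - wstar))
     \<le> M / (2 * m) * (norm (w - wstar))\<^sup>2 + (\<sigma> / (m * sqrt (real b)) + L * \<zeta> / m) * norm (w - wstar)"
proof -
  define e where "e = w - wstar"
  define K where "K = M / 2 * (norm e)\<^sup>2 + L * \<zeta> * norm e"
  have "{..<N} \<noteq> {}" using N by (simp add: lessThan_empty_iff)
  then have samples: "finite (samples N b)" "samples N b \<noteq> {}"
    by (simp_all add: samples_eq_lists_of_length finite_lists_of_length lists_of_length_nonempty)
  have "symmetric_matrix (Hb p)" for p
    unfolding Hb_def by (rule symmetric_matrix_favg) (rule symm)
  then have Hb_bound: "norm (Hb p *v x) \<le> L * norm x" for p x
    using \<mu> lower upper by (intro norm_matrix_vector_le_if_loewner_between[where c = \<mu>]) auto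
  have pointwise: "norm (w + q S - wstar) \<le> (1 / m) * (norm ((subHess H S w - Hb w) *v e) + K)"
    if S: "S \<in> samples N b" for S
  proof -
    have coercive: "m * norm v \<le> norm (subHess H S w *v v)" for v
      using m sub_lower[OF S] by (rule norm_matrix_vector_ge_if_loewner_le)
    have taylor: "norm (G w - Hb w *v e) \<le> M / 2 * (norm e)\<^sup>2"
      using gradient_taylor_remainder_le[OF dG lip, of w wstar] by (simp add: G_wstar e_def)
    have grad_bound: "norm (G w) \<le> L * norm e"
      using gradient_lipschitz[OF dG Hb_bound, of w wstar] by (simp add: G_wstar e_def)
    have grad_zero: "e = 0" if "G w = 0"
      using gradient_strongly_monotone[OF dG lower, of w wstar] \<mu> that
      by (simp add: G_wstar e_def mult_le_0_iff)
    have "m * norm (e + q S) \<le> norm ((subHess H S w - Hb w) *v e) + K"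
      using inexact_newton_step_error_le[OF coercive taylor grad_bound grad_zero residual[OF S]]
      by (simp add: K_def add.assoc)
    moreover have "w + q S - wstar = e + q S" by (simp add: e_def)
    ultimately show ?thesis using m by (simp add: field_simps)
  qed
  have "Exp (samples N b) (\<lambda>S. norm (w + q S - wstar))
      \<le> Exp (samples N b) (\<lambda>S. (1 / m) * (norm ((subHess H S w - Hb w) *v e) + K))"
    using pointwise by (rule Exp_mono[OF samples])
  also have "\<dots> = (1 / m) * (Exp (samples N b) (\<lambda>S. norm ((subHess H S w - Hb w) *v e)) + K)"
    by (subst Exp_cmult[OF samples], subst Exp_add[OF samples]) (simp only: Exp_const[OF samples])
  also have "\<dots> \<le> (1 / m) * (\<sigma> / sqrt (real b) * norm e + K)"
    using Exp_norm_subHess_deviation_le[where w = w and H = H, OF N b sigma symm var[unfolded Hb_def]] m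
    by (intro mult_left_mono add_right_mono) (auto simp: Hb_def)
  also have "\<dots> = M / (2 * m) * (norm e)\<^sup>2 + (\<sigma> / (m * sqrt (real b)) + L * \<zeta> / m) * norm e"
    using m by (simp add: K_def field_simps)
  finally show ?thesis unfolding e_def .
qed

section \<open>Linear convergence in expectation\<close>

lemma halving_of_quadratic_recursion:
  fixes a b :: "nat \<Rightarrow> real"
  assumes nonneg: "\<And>k. 0 \<le> a k"
    and moment: "\<And>k. b k \<le> \<gamma> * (a k)\<^sup>2"
    and recursion: "\<And>k. a (Suc k) \<le> C * b k + c * a k"
    and C: "0 \<le> C" and \<gamma>: "0 \<le> \<gamma>" and c: "c \<le> 1 / 4" and start: "4 * \<gamma> * C * a 0 \<le> 1"
  shows "a (Suc k) \<le> a k / 2"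
proof -
  have halving: "a (Suc k) \<le> a k / 2" if "a k \<le> a 0" for k
  proof -
    have "C * \<gamma> * a k \<le> C * \<gamma> * a 0" using that C \<gamma> by (simp add: mult_left_mono)
    then have small: "C * \<gamma> * a k \<le> 1 / 4" using start by (simp add: algebra_simps)
    have "a (Suc k) \<le> C * (\<gamma> * (a k)\<^sup>2) + c * a k"
      using recursion[of k] moment[of k] C by (meson add_right_mono mult_left_mono order_trans)
    also have "\<dots> = (C * \<gamma> * a k) * a k + c * a k" by (simp add: power2_eq_square algebra_simps)
    also have "\<dots> \<le> 1 / 4 * a k + 1 / 4 * a k"
      using small c nonneg[of k] by (intro add_mono mult_right_mono) auto
    finally show ?thesis by simp
  qed
  have "a k \<le> a 0" for k
  proof (induction k)
    case (Suc k)
    then show ?case using halving[OF Suc] nonneg[of k] by linarith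
  qed simp
  then show ?thesis by (rule halving)
qed

lemma Exp_histories_halving:
  fixes err :: "nat list list \<Rightarrow> real"
  assumes N: "N \<ge> 1" and nonneg: "\<And>h. 0 \<le> err h"
    and one_step: "\<And>k h. h \<in> histories N b k \<Longrightarrow>
      Exp (samples N b) (\<lambda>S. err (S # h)) \<le> C * (err h)\<^sup>2 + c * err h"
    and moment: "\<And>k. Exp (histories N b k) (\<lambda>h. (err h)\<^sup>2) \<le> \<gamma> * (Exp (histories N b k) err)\<^sup>2"
    and "0 \<le> C" "0 \<le> \<gamma>" "c \<le> 1 / 4" "4 * \<gamma> * C * err [] \<le> 1"
  shows "Exp (histories N b (Suc k)) err \<le> 1 / 2 * Exp (histories N b k) err"
proof -
  have "{..<N} \<noteq> {}" using N by (simp add: lessThan_empty_iff)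
  then have samples: "finite (samples N b)" "samples N b \<noteq> {}"
    by (simp_all add: samples_eq_lists_of_length finite_lists_of_length lists_of_length_nonempty)
  then have histories: "finite (histories N b k)" "histories N b k \<noteq> {}" for k
    by (simp_all add: histories_eq_lists_of_length finite_lists_of_length lists_of_length_nonempty)
  have "Exp (histories N b (Suc k)) err
      = Exp (histories N b k) (\<lambda>h. Exp (samples N b) (\<lambda>S. err (S # h)))" for k
    using samples by (simp add: histories_eq_lists_of_length Exp_lists_of_length_Suc)
  also have "\<dots> k \<le> Exp (histories N b k) (\<lambda>h. C * (err h)\<^sup>2 + c * err h)" for k
    using one_step by (intro Exp_mono[OF histories]) auto
  also have "\<dots> k = C * Exp (histories N b k) (\<lambda>h. (err h)\<^sup>2) + c * Exp (histories N b k) err" for k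
    by (simp add: Exp_add[OF histories] Exp_cmult[OF histories])
  finally have recursion: "Exp (histories N b (Suc k)) err
      \<le> C * Exp (histories N b k) (\<lambda>h. (err h)\<^sup>2) + c * Exp (histories N b k) err" for k .
  have "Exp (histories N b (Suc k)) err \<le> Exp (histories N b k) err / 2"
    by (rule halving_of_quadratic_recursion[where a = "\<lambda>k. Exp (histories N b k) err", OF _ moment recursion])
      (use assms(5-8) nonneg Exp_nonneg[OF histories] in \<open>simp_all add: histories_eq_lists_of_length\<close>)
  then show ?thesis by simp
qed

lemma contraction_coefficient_le_quarter:
  assumes mubar: "0 < mubar" "mubar \<le> m" and sigma: "0 \<le> \<sigma>" and L: "0 < L"
    and b: "real b \<ge> 64 * \<sigma>\<^sup>2 / mubar\<^sup>2" and zeta: "\<zeta> \<le> m / (8 * L)"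
  shows "\<sigma> / (m * sqrt (real b)) + L * \<zeta> / m \<le> 1 / 4"
proof -
  have "8 * \<sigma> / mubar = sqrt (64 * \<sigma>\<^sup>2 / mubar\<^sup>2)"
    using sigma mubar by (simp add: real_sqrt_mult real_sqrt_divide)
  also have "\<dots> \<le> sqrt (real b)" using b by (rule real_sqrt_le_mono)
  finally have "8 * \<sigma> \<le> mubar * sqrt (real b)" using mubar by (simp add: pos_divide_le_eq mult.commute)
  also have "\<dots> \<le> m * sqrt (real b)" using mubar by (intro mult_right_mono) auto
  finally have eight_sigma: "8 * \<sigma> \<le> m * sqrt (real b)" .
  have "\<sigma> / (m * sqrt (real b)) \<le> 1 / 8"
  proof (cases "b = 0")
    case False
    then have "0 < m * sqrt (real b)" using mubar by simp
    then show ?thesis using eight_sigma by (simp add: pos_divide_le_eq)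
  qed simp
  moreover have "L * \<zeta> / m \<le> 1 / 8"
    using mult_left_mono[OF zeta, of L] L mubar by (simp add: field_simps)
  ultimately show ?thesis by linarith
qed

theorem mainTheorem7:
  fixes N \<beta> :: nat
    and F :: "nat \<Rightarrow> real^'n \<Rightarrow> real"
    and g :: "nat \<Rightarrow> real^'n \<Rightarrow> real^'n"
    and H :: "nat \<Rightarrow> real^'n \<Rightarrow> real^'n^'n"
    and mu Lb :: "nat \<Rightarrow> real"
    and mubar Lbar \<mu> L M \<sigma> \<zeta> \<gamma> :: real
    and wstar w0 :: "real^'n"
    and p :: "nat list list \<Rightarrow> nat list \<Rightarrow> real^'n"
  assumes N_pos: "N \<ge> 1" and beta_pos: "\<beta> \<ge> 1"
    and grad: "\<And>i w. i < N \<Longrightarrow> (F i has_derivative (\<lambda>v. g i w \<bullet> v)) (at w)"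
    and hess: "\<And>i w. i < N \<Longrightarrow> (g i has_derivative (\<lambda>v. H i w *v v)) (at w)"
    and hess_cont: "\<And>i. i < N \<Longrightarrow> continuous_on UNIV (H i)"
    and wstar_min: "\<And>w. favg N (\<lambda>i. F i wstar) \<le> favg N (\<lambda>i. F i w)"
    and wstar_unique: "\<And>z. (\<forall>w. favg N (\<lambda>i. F i z) \<le> favg N (\<lambda>i. F i w)) \<Longrightarrow> z = wstar"
    \<comment> \<open>Assumption A1\<close>
    and A1_sub: "\<And>b S w. b \<ge> 1 \<Longrightarrow> S \<in> samples N b \<Longrightarrow>
        0 < mu b \<and> mu b \<le> Lb b \<and> mubar \<le> mu b \<and> Lb b \<le> Lbar \<and>
        loewner_le (mu b *\<^sub>R mat 1) (subHess H S w) \<and> loewner_le (subHess H S w) (Lb b *\<^sub>R mat 1)"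
    and A1_bar: "0 < mubar" "mubar \<le> Lbar"
    and A1_full: "0 < \<mu>" "\<mu> \<le> L"
      "\<And>w. loewner_le (\<mu> *\<^sub>R mat 1) (favg N (\<lambda>i. H i w))"
      "\<And>w. loewner_le (favg N (\<lambda>i. H i w)) (L *\<^sub>R mat 1)"
    \<comment> \<open>Assumption A3\<close>
    and A3: "\<And>w z. opnorm (favg N (\<lambda>i. H i w) - favg N (\<lambda>i. H i z)) \<le> M * norm (w - z)"
    \<comment> \<open>Assumption A4\<close>
    and sigma_nonneg: "0 \<le> \<sigma>"
    and A4: "\<And>w. opnorm (favg N (\<lambda>i. (H i w - favg N (\<lambda>j. H j w)) ** (H i w - favg N (\<lambda>j. H j w))))
                  \<le> \<sigma>\<^sup>2"
    and zeta_lt: "\<zeta> < 1"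
    and residual: "\<And>h S. set h \<subseteq> samples N \<beta> \<Longrightarrow> S \<in> samples N \<beta> \<Longrightarrow>
        norm (subHess H S (traj w0 p h) *v p h S + favg N (\<lambda>i. g i (traj w0 p h)))
          \<le> \<zeta> * norm (favg N (\<lambda>i. g i (traj w0 p h)))"
  shows
    "(\<forall>k. \<forall>h\<in>histories N \<beta> k.
        Exp (samples N \<beta>) (\<lambda>S. norm (traj w0 p (S # h) - wstar))
          \<le> M / (2 * mu \<beta>) * (norm (traj w0 p h - wstar))\<^sup>2
            + (\<sigma> / (mu \<beta> * sqrt (real \<beta>)) + L * \<zeta> / mu \<beta>) * norm (traj w0 p h - wstar))
     \<and>
     ((0 < \<gamma> \<and>
       (\<forall>k. Exp (histories N \<beta> k) (\<lambda>h. (norm (traj w0 p h - wstar))\<^sup>2)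
              \<le> \<gamma> * (Exp (histories N \<beta> k) (\<lambda>h. norm (traj w0 p h - wstar)))\<^sup>2) \<and>
       real \<beta> \<ge> 64 * \<sigma>\<^sup>2 / mubar\<^sup>2 \<and>
       \<zeta> \<le> mu \<beta> / (8 * L) \<and>
       4 * (M / (2 * mu \<beta>)) * norm (w0 - wstar) \<le> 1 \<and>
       4 * \<gamma> * (M / (2 * mu \<beta>)) * norm (w0 - wstar) \<le> 1)
      \<longrightarrow> (\<forall>k. Exp (histories N \<beta> (Suc k)) (\<lambda>h. norm (traj w0 p h - wstar))
                 \<le> 1 / 2 * Exp (histories N \<beta> k) (\<lambda>h. norm (traj w0 p h - wstar))))"
proof -
  have dG: "((\<lambda>w. favg N (\<lambda>i. g i w)) has_derivative (\<lambda>v. favg N (\<lambda>i. H i w) *v v)) (at w)" for w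
    using hess by (rule has_derivative_favg_matrix_vector_mult)
  have G_wstar: "favg N (\<lambda>i. g i wstar) = 0"
    by (rule gradient_eq_0_at_minimum[where f = "\<lambda>w. favg N (\<lambda>i. F i w)",
          OF has_derivative_favg_inner wstar_min]) (rule grad)
  have symm: "symmetric_matrix (H i w)" if "i < N" for i w
    using that grad hess hess_cont by (intro hessian_symmetric[of "F i" "g i"]) auto
  have "replicate \<beta> 0 \<in> samples N \<beta>" using N_pos by (auto simp: samples_def)
  then have mu: "0 < mu \<beta>" "mubar \<le> mu \<beta>" using A1_sub[OF beta_pos] by blast+
  have sub_lower: "loewner_le (mu \<beta> *\<^sub>R mat 1) (subHess H S w)" if "S \<in> samples N \<beta>" for S w
    using A1_sub[OF beta_pos that] by blast
  have one_step: "Exp (samples N \<beta>) (\<lambda>S. norm (traj w0 p (S # h) - wstar))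
      \<le> M / (2 * mu \<beta>) * (norm (traj w0 p h - wstar))\<^sup>2
        + (\<sigma> / (mu \<beta> * sqrt (real \<beta>)) + L * \<zeta> / mu \<beta>) * norm (traj w0 p h - wstar)"
    if "h \<in> histories N \<beta> k" for k h
  proof -
    have "set h \<subseteq> samples N \<beta>" using that by (simp add: histories_def)
    have "Exp (samples N \<beta>) (\<lambda>S. norm (traj w0 p h + p h S - wstar))
      \<le> M / (2 * mu \<beta>) * (norm (traj w0 p h - wstar))\<^sup>2
        + (\<sigma> / (mu \<beta> * sqrt (real \<beta>)) + L * \<zeta> / mu \<beta>) * norm (traj w0 p h - wstar)"
      by (rule Exp_newton_step_error_le[OF N_pos beta_pos sigma_nonneg mu(1) A1_full(1) dG G_wstar
          symm A1_full(3,4) A3 A4 sub_lower residual[OF \<open>set h \<subseteq> samples N \<beta>\<close>]])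
    then show ?thesis by simp
  qed
  moreover have "Exp (histories N \<beta> (Suc k)) (\<lambda>h. norm (traj w0 p h - wstar))
      \<le> 1 / 2 * Exp (histories N \<beta> k) (\<lambda>h. norm (traj w0 p h - wstar))"
    if \<gamma>: "0 < \<gamma>"
      and moment: "\<forall>k. Exp (histories N \<beta> k) (\<lambda>h. (norm (traj w0 p h - wstar))\<^sup>2)
              \<le> \<gamma> * (Exp (histories N \<beta> k) (\<lambda>h. norm (traj w0 p h - wstar)))\<^sup>2"
      and batch: "real \<beta> \<ge> 64 * \<sigma>\<^sup>2 / mubar\<^sup>2" and \<zeta>: "\<zeta> \<le> mu \<beta> / (8 * L)"
      and start: "4 * \<gamma> * (M / (2 * mu \<beta>)) * norm (w0 - wstar) \<le> 1" for k
  proof (rule Exp_histories_halving[where \<gamma> = \<gamma>, OF N_pos _ one_step])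
    show "0 \<le> M / (2 * mu \<beta>)" using nonneg_if_opnorm_lipschitz[OF A3] mu(1) by simp
    show "\<sigma> / (mu \<beta> * sqrt (real \<beta>)) + L * \<zeta> / mu \<beta> \<le> 1 / 4"
      using A1_bar(1) mu(2) sigma_nonneg A1_full(1,2) batch \<zeta>
      by (intro contraction_coefficient_le_quarter[of mubar]) auto
  qed (use \<gamma> moment start in auto)
  ultimately show ?thesis by blast
qed

end
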